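(* Fix $p\geq 3$ and put $\lambda=\lambda_p=2\cos(\pi/p)$. Then every admissible $\lambda$-continued fraction converges; that is, for every real $\alpha$ with admissible $\lambda$-continued fraction $[r_0;r_1,\dots]$, the limit $\lim_{n\to\infty}[r_0;r_1,\dots,r_n]$ exists.
   Context: For integers $r_0,\dots,r_n$, the finite $\lambda$-continued fraction is $[r_0;r_1,\dots,r_n]= r_0\lambda-\cfrac{1}{r_1\lambda-\cfrac{1}{\ddots-\cfrac{1}{r_n\lambda}}}$, and an infinite one $[r_0;r_1,\dots]$ is $\lim_{n\to\infty}[r_0;r_1,\dots,r_n]$ if the limit exists. Every finite real $\alpha$ is expanded by the "next integral multiple of $\lambda$" algorithm: $\alpha_0=\alpha$, and for $j\ge 0$, $r_j=\lfloor \alpha_j/\lambda\rfloor+1$ and $\alpha_{j+1}=\frac{1}{r_j\lambda-\alpha_j}$. The resulting sequence $[r_0;r_1,\dots]$ is the $\lambda$-continued fraction of $\alpha$; a $\lambda$-continued fraction is called admissible if it arises from some finite real number by this algorithm. *)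

theory Defs
  imports Complex_Main
begin

definition lam :: "nat \<Rightarrow> real" where
  "lam p = 2 * cos (pi / real p)"

text \<open>The "next integral multiple of lambda" algorithm:
  alpha_0 = alpha, r_j = floor(alpha_j / lambda) + 1, alpha_(j+1) = 1/(r_j lambda - alpha_j).\<close>
fun cf_alpha :: "real \<Rightarrow> real \<Rightarrow> nat \<Rightarrow> real" where
  "cf_alpha l \<alpha> 0 = \<alpha>"
| "cf_alpha l \<alpha> (Suc j) =
     1 / (real_of_int (\<lfloor>cf_alpha l \<alpha> j / l\<rfloor> + 1) * l - cf_alpha l \<alpha> j)"

definition cf_digits :: "real \<Rightarrow> real \<Rightarrow> nat \<Rightarrow> int" where
  "cf_digits l \<alpha> j = \<lfloor>cf_alpha l \<alpha> j / l\<rfloor> + 1"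

text \<open>cf_tail l r k m is the finite lambda-continued fraction [r_k; r_(k+1), ..., r_(k+m)].\<close>
fun cf_tail :: "real \<Rightarrow> (nat \<Rightarrow> int) \<Rightarrow> nat \<Rightarrow> nat \<Rightarrow> real" where
  "cf_tail l r k 0 = real_of_int (r k) * l"
| "cf_tail l r k (Suc m) = real_of_int (r k) * l - 1 / cf_tail l r (Suc k) m"

definition cf_conv :: "real \<Rightarrow> (nat \<Rightarrow> int) \<Rightarrow> nat \<Rightarrow> real" where
  "cf_conv l r n = cf_tail l r 0 n"

end

theory Submission
  imports Defs
begin

text \<open>Only \<open>\<lambda> > 0\<close> matters. The algorithm chooses \<open>r\<^sub>k\<lambda> > \<alpha>\<^sub>k\<close>, so every
  \<open>\<alpha>\<^sub>k\<^sub>+\<^sub>1 = 1/(r\<^sub>k\<lambda> - \<alpha>\<^sub>k)\<close> is positive, and by induction on the length every finite tail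
  \<open>[r\<^sub>k; \<dots>, r\<^sub>k\<^sub>+\<^sub>m]\<close> exceeds \<open>\<alpha>\<^sub>k\<close>. Consequently the tails are positive, and appending
  one more digit lowers a tail (again by induction, starting from \<open>r\<^sub>k\<lambda> - 1/(r\<^sub>k\<^sub>+\<^sub>1\<lambda>) < r\<^sub>k\<lambda>\<close>).
  The convergents thus decrease and are bounded below by \<open>\<alpha>\<close>, so they converge.\<close>

lemma cf_alpha_less_digit:
  assumes "l > 0"
  shows "cf_alpha l a k < real_of_int (cf_digits l a k) * l"
proof -
  have "cf_alpha l a k / l < real_of_int (\<lfloor>cf_alpha l a k / l\<rfloor> + 1)"
    by linarith
  then show ?thesis
    using pos_divide_less_eq[OF assms] unfolding cf_digits_def by blast
qed

lemma cf_alpha_Suc_pos: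
  assumes "l > 0"
  shows "cf_alpha l a (Suc k) > 0"
  using cf_alpha_less_digit[OF assms, of a k] by (simp add: cf_digits_def)

lemma inverse_cf_alpha_Suc:
  "1 / cf_alpha l a (Suc k) = real_of_int (cf_digits l a k) * l - cf_alpha l a k"
  by (simp add: cf_digits_def)

lemma cf_alpha_less_cf_tail:
  assumes "l > 0"
  shows "cf_alpha l a k < cf_tail l (cf_digits l a) k m"
proof (induction m arbitrary: k)
  case 0
  show ?case using cf_alpha_less_digit[OF assms] by simp
next
  case (Suc m)
  have "1 / cf_tail l (cf_digits l a) (Suc k) m < 1 / cf_alpha l a (Suc k)"
    using cf_alpha_Suc_pos[OF assms] Suc.IH[of "Suc k"]
    by (rule frac_less2[OF zero_less_one order_refl])
  then show ?case
    using inverse_cf_alpha_Suc[of l a k] by (simp only: cf_tail.simps)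
qed

lemma cf_tail_pos:
  assumes "l > 0"
  shows "cf_tail l (cf_digits l a) (Suc k) m > 0"
  using cf_alpha_less_cf_tail[OF assms, of a "Suc k" m] cf_alpha_Suc_pos[OF assms, of a k]
  by linarith

lemma cf_tail_Suc_less:
  assumes "l > 0"
  shows "cf_tail l (cf_digits l a) k (Suc m) < cf_tail l (cf_digits l a) k m"
proof (induction m arbitrary: k)
  case 0
  show ?case using cf_tail_pos[OF assms, of a k 0] by simp
next
  case (Suc m)
  have "1 / cf_tail l (cf_digits l a) (Suc k) m < 1 / cf_tail l (cf_digits l a) (Suc k) (Suc m)"
    using cf_tail_pos[OF assms, of a k "Suc m"] Suc.IH[of "Suc k"]
    by (rule frac_less2[OF zero_less_one order_refl])
  then show ?case by (simp only: cf_tail.simps)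
qed

lemma convergent_cf_conv_digits:
  assumes "l > 0"
  shows "convergent (cf_conv l (cf_digits l a))"
proof -
  have "decseq (cf_conv l (cf_digits l a))"
    unfolding cf_conv_def
    by (intro decseq_SucI less_imp_le cf_tail_Suc_less assms)
  moreover have "\<forall>n. a \<le> cf_conv l (cf_digits l a) n"
    using cf_alpha_less_cf_tail[OF assms, of a 0] by (simp add: cf_conv_def less_imp_le)
  ultimately show ?thesis
    by (blast intro: decseq_convergent convergentI)
qed

lemma lam_pos:
  assumes "p \<ge> 3"
  shows "lam p > 0"
proof -
  have "pi / real p < pi / 2"
    using assms by (intro divide_strict_left_mono) auto
  moreover have "pi / real p > 0"
    using assms by simp
  ultimately show ?thesis
    unfolding lam_def by (simp add: cos_gt_zero_pi)
qed

theorem lemma2p1: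
  fixes p :: nat and \<alpha> :: real
  assumes "p \<ge> 3"
  shows "convergent (\<lambda>n. cf_conv (lam p) (cf_digits (lam p) \<alpha>) n)"
  using lam_pos[OF assms] by (rule convergent_cf_conv_digits)

end
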